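(* Let $\bar w\in\mathbb{R}^{d_1}\setminus\{0\}$ and $\bar x\in\mathbb{R}^{d_2}\setminus\{0\}$. The set of points $(w,x)$ with $0\in\partial f_P(w,x)$ (limiting subdifferential) is exactly $$\mathcal{S}\cup\{0\}\cup\{(w,x):\langle w,\bar w\rangle=0,\ \langle x,\bar x\rangle=0,\ wx^\top=0\},$$ where $\mathcal{S}=\{(\alpha\bar w,\bar x/\alpha):\alpha\in\mathbb{R}\setminus\{0\}\}$.
   Context: The population objective is $f_P(w,x)=\mathbb{E}\,|a^\top(wx^\top-\bar w\bar x^\top)b|$ with $a\sim N(0,I_{d_1})$, $b\sim N(0,I_{d_2})$ independent. The limiting subdifferential $\partial h(\bar z)$ of a function $h$ is the set of $\xi$ for which there exist $z_n\to\bar z$ with $h(z_n)\to h(\bar z)$ and $\xi_n\to\xi$, where each $\xi_n$ is a Fréchet subgradient at $z_n$, i.e. $h(z)\ge h(z_n)+\langle\xi_n,z-z_n\rangle+o(\|z-z_n\|)$ as $z\to z_n$. *)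

theory Defs
  imports "HOL-Probability.Probability"
begin

definition std_gaussian :: "(real ^ 'n) measure" where
  "std_gaussian = density lborel
     (\<lambda>a. ennreal ((2 * pi) powr (- real CARD('n) / 2) * exp (- (norm a)\<^sup>2 / 2)))"

definition outer :: "real ^ 'n \<Rightarrow> real ^ 'm \<Rightarrow> real ^ 'm ^ 'n" where
  "outer w x = (\<chi> i j. w $ i * x $ j)"

definition fP :: "real ^ 'n \<Rightarrow> real ^ 'm \<Rightarrow> (real ^ 'n) \<times> (real ^ 'm) \<Rightarrow> real" where
  "fP wbar xbar z = (case z of (w, x) \<Rightarrow>
     integral\<^sup>L (std_gaussian \<Otimes>\<^sub>M std_gaussian)
       (\<lambda>(a, b). \<bar>a \<bullet> ((outer w x - outer wbar xbar) *v b)\<bar>))"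

definition frechet_subgrad :: "('a::real_inner \<Rightarrow> real) \<Rightarrow> 'a \<Rightarrow> 'a \<Rightarrow> bool" where
  "frechet_subgrad h z \<xi> \<longleftrightarrow>
     (\<forall>\<epsilon>>0. \<forall>\<^sub>F y in at z. h y \<ge> h z + \<xi> \<bullet> (y - z) - \<epsilon> * norm (y - z))"

definition limiting_subdiff :: "('a::real_inner \<Rightarrow> real) \<Rightarrow> 'a \<Rightarrow> 'a set" where
  "limiting_subdiff h z = {\<xi>. \<exists>zs \<xi>s. zs \<longlonglongrightarrow> z \<and> (\<lambda>n. h (zs n)) \<longlonglongrightarrow> h z \<and>
      \<xi>s \<longlonglongrightarrow> \<xi> \<and> (\<forall>n. frechet_subgrad h (zs n) (\<xi>s n))}"

end

theory Submission
  imports Defs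
begin

text \<open>The objective is continuous and convex in each of the blocks \<open>w\<close> and \<open>x\<close>. For
  \<open>w \<noteq> 0\<close> the block \<open>x \<mapsto> fP wbar xbar (w, x)\<close> has the strict minimiser
  \<open>x = ((w \<bullet> wbar) / (w \<bullet> w)) *\<^sub>R xbar\<close>: reflecting the Gaussian vector \<open>a\<close> in the
  hyperplane orthogonal to \<open>w\<close> shows that the value there is the average of two strictly
  larger values. Away from this minimiser a step towards it decreases the objective, and
  convexity along the step bounds that decrease by the norm of any nearby Frechet
  subgradient, so \<open>0\<close> is not a limiting subgradient; likewise with \<open>w\<close> and \<open>x\<close> exchanged.
  What survives are the global minimisers \<open>(\<alpha> *\<^sub>R wbar, (1 / \<alpha>) *\<^sub>R xbar)\<close> and the points
  with \<open>w \<bullet> wbar = 0\<close>, \<open>x \<bullet> xbar = 0\<close> and \<open>w = 0 \<or> x = 0\<close>. At the latter the objective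
  has the minorant \<open>fP wbar xbar (w, x) - C * norm (w' - w) * norm (x' - x)\<close>, because every
  term of the expansion around \<open>(w, x)\<close> except the one along \<open>(wbar, xbar)\<close> is odd under a
  Householder reflection; such a quadratic minorant makes \<open>0\<close> a Frechet subgradient.\<close>

section \<open>Householder reflections\<close>

text \<open>For \<open>e = 0\<close> the division by \<open>e \<bullet> e = 0\<close> makes \<open>householder 0\<close> the identity,
  so the lemmas below need no hypothesis on \<open>e\<close>.\<close>

definition householder :: "'a::real_inner \<Rightarrow> 'a \<Rightarrow> 'a" where
  "householder e a = a - (2 * (a \<bullet> e) / (e \<bullet> e)) *\<^sub>R e"

lemma linear_householder: "linear (householder e)"
  unfolding householder_def
  by (intro linearI) (auto simp: algebra_simps inner_add_left add_divide_distrib)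

lemma householder_inner_self [simp]: "householder e a \<bullet> e = - (a \<bullet> e)"
  by (cases "e = 0") (simp_all add: householder_def inner_diff_left)

lemma householder_inner_orthogonal: "v \<bullet> e = 0 \<Longrightarrow> householder e a \<bullet> v = a \<bullet> v"
  unfolding householder_def
  by (metis inner_commute inner_diff_left inner_scaleR_left mult_zero_right diff_zero)

lemma householder_inner_householder: "householder e a \<bullet> householder e b = a \<bullet> b"
  by (cases "e = 0")
    (simp_all add: householder_def inner_diff_left inner_diff_right algebra_simps inner_commute)

lemma orthogonal_transformation_householder: "orthogonal_transformation (householder e)"
  unfolding orthogonal_transformation_def
  using linear_householder householder_inner_householder by blast

section \<open>Linear maps scale Lebesgue measure\<close>

text \<open>The library proves this, with the constant \<open>\<bar>det (matrix f)\<bar>\<close>, only for index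
  types of sort \<open>wellorder\<close>; the bare existence of a scaling constant holds for every
  finite index type and suffices for orthogonal transformations.\<close>

definition scales_lebesgue_measure :: "(real^'n \<Rightarrow> real^'n) \<Rightarrow> bool" where
  "scales_lebesgue_measure f \<longleftrightarrow> (\<exists>c. \<forall>S \<in> lmeasurable.
     f ` S \<in> lmeasurable \<and> measure lebesgue (f ` S) = c * measure lebesgue S)"

lemma scales_lebesgue_measure_if_cbox:
  fixes f :: "real^'n \<Rightarrow> real^'n"
  assumes "linear f"
    and "\<And>a b. measure lebesgue (f ` cbox a b) = c * measure lebesgue (cbox a b)"
  shows "scales_lebesgue_measure f"
  unfolding scales_lebesgue_measure_def
  using measure_linear_sufficient[OF assms(1) _ assms(2)] by metis

lemma measure_swap_coordinates_cbox:
  fixes a b :: "real^'n"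
  shows "measure lebesgue ((\<lambda>v. \<chi> i. v $ Transposition.transpose m n i) ` cbox a b)
    = measure lebesgue (cbox a b)"
proof (cases "cbox a b = {}")
  case False
  let ?h = "\<lambda>v::real^'n. \<chi> i. v $ Transposition.transpose m n i"
  have image: "?h ` cbox a b = cbox (?h a) (?h b)"
    by (auto simp: image_iff lambda_swap_Galois mem_box_cart) (metis transpose_involutory)+
  then have "?h ` cbox a b \<noteq> {}"
    using False by blast
  then show ?thesis
    using prod.permute[OF permutes_swap_id, where S=UNIV and g="\<lambda>i. (b - a) $ i", symmetric]
    by (simp add: image content_cbox_cart False)
qed simp

lemma measure_shear_coordinates_cbox:
  fixes a b :: "real^'n"
  assumes "m \<noteq> n"
  shows "measure lebesgue ((\<lambda>v. \<chi> i. if i = m then v $ m + v $ n else v $ i) ` cbox a b)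
    = measure lebesgue (cbox a b)"
proof (cases "cbox a b = {}")
  case False
  let ?h = "\<lambda>v::real^'n. \<chi> i. if i = m then v $ m + v $ n else v $ i"
  let ?v = "\<chi> i. if i = n then - a $ n else 0"
  have "?h ` cbox a b = (+) (\<chi> i. if i = m \<or> i = n then a $ n else 0) ` ?h ` (+) ?v ` cbox a b"
    using assms unfolding image_comp o_def by (force simp: vec_eq_iff)
  then have "measure lebesgue (?h ` cbox a b) = measure lebesgue (?h ` (+) ?v ` cbox a b)"
    by (simp only: measure_translation)
  also have "\<dots> = measure lebesgue (?h ` cbox (?v + a) (?v + b))"
    by (metis (no_types, lifting) cbox_translation)
  also have "\<dots> = measure lebesgue ((+) ?v ` cbox a b)"
  proof -
    have "(+) ?v ` cbox a b \<noteq> {}"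
      using False by blast
    then show ?thesis
      using assms by (subst measure_shear_interval) (auto simp: cbox_translation)
  qed
  also have "\<dots> = measure lebesgue (cbox a b)"
    by (rule measure_translation)
  finally show ?thesis .
qed simp

lemma scales_lebesgue_measure_linear:
  fixes f :: "real^'n \<Rightarrow> real^'n"
  assumes "linear f"
  shows "scales_lebesgue_measure f"
proof (rule induct_linear_elementary[OF assms])
  fix f g :: "real^'n \<Rightarrow> real^'n"
  assume "scales_lebesgue_measure f" "scales_lebesgue_measure g"
  then obtain c d where
    f: "\<And>S. S \<in> lmeasurable \<Longrightarrow> f ` S \<in> lmeasurable \<and> measure lebesgue (f ` S) = c * measure lebesgue S" and
    g: "\<And>S. S \<in> lmeasurable \<Longrightarrow> g ` S \<in> lmeasurable \<and> measure lebesgue (g ` S) = d * measure lebesgue S"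
    unfolding scales_lebesgue_measure_def by metis
  show "scales_lebesgue_measure (f \<circ> g)"
    unfolding scales_lebesgue_measure_def
  proof (intro exI[of _ "c * d"] ballI)
    fix S :: "(real^'n) set"
    assume "S \<in> lmeasurable"
    moreover have "(f \<circ> g) ` S = f ` g ` S"
      by (simp add: image_comp)
    ultimately show "(f \<circ> g) ` S \<in> lmeasurable \<and> measure lebesgue ((f \<circ> g) ` S) = c * d * measure lebesgue S"
      using f g by simp
  qed
next
  fix f :: "real^'n \<Rightarrow> real^'n" and i
  assume f: "linear f" and "\<And>x. f x $ i = 0"
  then have "\<not> inj f"
    by (metis (full_types) linear_injective_imp_surjective one_neq_zero surjE vec_component)
  then have "negligible (f ` S)" for S
    using f negligible_linear_singular_image by blast
  then show "scales_lebesgue_measure f"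
    unfolding scales_lebesgue_measure_def
    by (intro exI[of _ 0]) (auto simp: negligible_iff_measure)
next
  fix c :: "'n \<Rightarrow> real"
  show "scales_lebesgue_measure (\<lambda>x. \<chi> i. c i * x $ i)"
    unfolding scales_lebesgue_measure_def
    by (intro exI[of _ "\<bar>prod c UNIV\<bar>"]) (simp add: measurable_stretch measure_stretch)
next
  fix m n :: 'n
  show "scales_lebesgue_measure (\<lambda>v. \<chi> i. v $ Transposition.transpose m n i)"
    by (rule scales_lebesgue_measure_if_cbox[where c=1])
      (auto intro!: linearI simp: measure_swap_coordinates_cbox vec_eq_iff)
next
  fix m n :: 'n
  assume "m \<noteq> n"
  then show "scales_lebesgue_measure (\<lambda>v. \<chi> i. if i = m then v $ m + v $ n else v $ i)"
    by (intro scales_lebesgue_measure_if_cbox[where c=1] linearI)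
      (auto simp: measure_shear_coordinates_cbox vec_eq_iff algebra_simps)
qed

lemma
  fixes f :: "real^'n \<Rightarrow> real^'n"
  assumes f: "orthogonal_transformation f" and S: "S \<in> lmeasurable"
  shows lmeasurable_orthogonal_transformation_image: "f ` S \<in> lmeasurable"
    and measure_orthogonal_transformation_image: "measure lebesgue (f ` S) = measure lebesgue S"
proof -
  obtain c where c: "\<And>S. S \<in> lmeasurable \<Longrightarrow> f ` S \<in> lmeasurable \<and> measure lebesgue (f ` S) = c * measure lebesgue S"
    using scales_lebesgue_measure_linear[OF orthogonal_transformation_linear[OF f]]
    unfolding scales_lebesgue_measure_def by metis
  have "f ` cball 0 1 = cball 0 1"
    using image_orthogonal_transformation_cball[OF f]
    by (simp add: linear_0 orthogonal_transformation_linear[OF f])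
  moreover have "measure lebesgue (cball (0::real^'n) 1) > 0"
    by (simp add: content_cball_pos)
  ultimately have "c = 1"
    using c[of "cball 0 1"] by simp
  then show "f ` S \<in> lmeasurable" "measure lebesgue (f ` S) = measure lebesgue S"
    using c[OF S] by auto
qed

section \<open>Orthogonal invariance of the standard Gaussian\<close>

lemma borel_measurable_orthogonal_transformation:
  fixes f :: "'a::euclidean_space \<Rightarrow> 'a"
  assumes "orthogonal_transformation f"
  shows "f \<in> borel_measurable borel"
  using orthogonal_transformation_linear[OF assms]
  by (intro borel_measurable_continuous_onI linear_continuous_on)
    (simp add: linear_conv_bounded_linear)

lemma distr_lborel_orthogonal_transformation:
  fixes f :: "real^'n \<Rightarrow> real^'n"
  assumes f: "orthogonal_transformation f"
  shows "distr lborel borel f = lborel"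
proof (rule lborel_eqI[symmetric])
  note [measurable] = borel_measurable_orthogonal_transformation[OF f]
  have g: "orthogonal_transformation (inv f)"
    using f by (rule orthogonal_transformation_inv)
  have vimage: "f -` S = inv f ` S" for S
    using orthogonal_transformation_bij[OF f] by (rule bij_vimage_eq_inv_image)
  fix l u :: "real^'n"
  assume lu: "\<And>b. b \<in> Basis \<Longrightarrow> l \<bullet> b \<le> u \<bullet> b"
  have box: "box l u \<in> lmeasurable" by simp
  have borel: "inv f ` box l u \<in> sets borel"
    using measurable_sets_borel[of f borel "box l u"] by (simp add: vimage)
  have "emeasure (distr lborel borel f) (box l u) = emeasure lebesgue (inv f ` box l u)"
    using borel by (simp add: emeasure_distr vimage emeasure_completion)
  also have "\<dots> = measure lebesgue (box l u)"
    using lmeasurable_orthogonal_transformation_image[OF g box]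
      measure_orthogonal_transformation_image[OF g box]
    by (simp add: emeasure_eq_measure2)
  also have "\<dots> = emeasure lborel (box l u)"
    using box by (simp add: emeasure_eq_measure2 emeasure_completion)
  also have "\<dots> = (\<Prod>b\<in>Basis. (u - l) \<bullet> b)"
    using lu by simp
  finally show "emeasure (distr lborel borel f) (box l u) = (\<Prod>b\<in>Basis. (u - l) \<bullet> b)" .
qed simp

definition std_gaussian_density :: "real^'n \<Rightarrow> real" where
  "std_gaussian_density a = (2 * pi) powr (- real CARD('n) / 2) * exp (- (norm a)\<^sup>2 / 2)"

lemma std_gaussian_eq_density:
  "std_gaussian = density lborel (\<lambda>a. ennreal (std_gaussian_density a))"
  by (simp add: std_gaussian_def std_gaussian_density_def)

lemma sets_std_gaussian [simp, measurable_cong]: "sets std_gaussian = sets borel"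
  by (simp add: std_gaussian_def)

lemma space_std_gaussian [simp]: "space std_gaussian = UNIV"
  by (simp add: std_gaussian_def)

lemma std_gaussian_density_pos: "std_gaussian_density a > 0"
  by (simp add: std_gaussian_density_def)

lemma borel_measurable_std_gaussian_density [measurable]:
  "std_gaussian_density \<in> borel_measurable borel"
  unfolding std_gaussian_density_def by measurable

lemma distr_std_gaussian_orthogonal_transformation:
  fixes f :: "real^'n \<Rightarrow> real^'n"
  assumes f: "orthogonal_transformation f"
  shows "distr std_gaussian std_gaussian f = std_gaussian"
proof -
  note [measurable] = borel_measurable_orthogonal_transformation[OF f]
  have "std_gaussian = density (distr lborel borel f) (\<lambda>a. ennreal (std_gaussian_density a))"
    by (simp add: distr_lborel_orthogonal_transformation[OF f] std_gaussian_eq_density)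
  also have "\<dots> = distr (density lborel (\<lambda>a. ennreal (std_gaussian_density (f a)))) borel f"
    by (rule density_distr) auto
  also have "\<dots> = distr std_gaussian borel f"
    using orthogonal_transformation_norm[OF f]
    by (simp add: std_gaussian_eq_density std_gaussian_density_def)
  finally show ?thesis
    by (metis distr_cong sets_std_gaussian)
qed

lemma one_add_sum_le_prod_one_add:
  fixes f :: "'a \<Rightarrow> real"
  assumes "finite A" and "\<And>x. x \<in> A \<Longrightarrow> 0 \<le> f x"
  shows "1 + sum f A \<le> (\<Prod>x\<in>A. 1 + f x)"
  using assms
proof (induction A rule: finite_induct)
  case (insert x F)
  then have "1 + sum f (insert x F) \<le> (1 + f x) * (1 + sum f F)"
    by (simp add: algebra_simps sum_nonneg)
  also have "\<dots> \<le> (1 + f x) * (\<Prod>x\<in>F. 1 + f x)"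
    using insert by (intro mult_left_mono) auto
  finally show ?case
    using insert by simp
qed simp

lemma std_gaussian_density_eq_prod:
  "std_gaussian_density (a :: real^'n) = (\<Prod>b\<in>Basis. std_normal_density (a \<bullet> b))"
proof -
  have normal: "std_normal_density t = (2 * pi) powr (- (1/2)) * exp (- t\<^sup>2 / 2)" for t
    by (simp add: std_normal_density_def powr_minus_divide powr_half_sqrt)
  have norm2: "(norm a)\<^sup>2 = (\<Sum>b\<in>Basis. (a \<bullet> b)\<^sup>2)"
    unfolding power2_norm_eq_inner by (subst euclidean_inner) (simp add: power2_eq_square)
  have "(\<Prod>b\<in>(Basis :: (real^'n) set). (2 * pi) powr (- (1/2))) = (2 * pi) powr (- real CARD('n) / 2)"
    by (simp add: powr_power)
  moreover have "(\<Prod>b\<in>(Basis :: (real^'n) set). exp (- (a \<bullet> b)\<^sup>2 / 2)) = exp (- (norm a)\<^sup>2 / 2)"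
    by (simp add: norm2 exp_sum[symmetric] sum_divide_distrib sum_negf)
  ultimately show ?thesis
    by (simp add: normal prod.distrib std_gaussian_density_def)
qed

text \<open>The weight \<open>1 + norm a\<close> is dominated by \<open>\<Prod>\<^sub>b (1 + \<bar>a \<bullet> b\<bar>)\<close>, which makes
  the integral factorise into one-dimensional absolute moments.\<close>

lemma nn_integral_std_gaussian_one_add_norm:
  "(\<integral>\<^sup>+a. ennreal (1 + norm a) \<partial>(std_gaussian :: (real^'n) measure)) < \<infinity>"
proof -
  define F where "F t = std_normal_density t * (1 + \<bar>t\<bar>)" for t
  have F_nonneg: "0 \<le> F t" for t
    unfolding F_def by simp
  have "integrable lborel F"
    unfolding F_def
    using integrable_std_normal_moment_abs[of 1] integrable_std_normal_moment_abs[of 0]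
    by (simp add: distrib_left)
  then have F_finite: "(\<integral>\<^sup>+t. ennreal (F t) \<partial>lborel) < \<infinity>"
    using F_nonneg by (simp add: nn_integral_eq_integral)
  have bound: "std_gaussian_density a * (1 + norm a) \<le> (\<Prod>b\<in>Basis. F (a \<bullet> b))"
    for a :: "real^'n"
  proof -
    have "1 + norm a \<le> 1 + (\<Sum>b\<in>Basis. \<bar>a \<bullet> b\<bar>)"
      using norm_le_l1[of a] by simp
    also have "\<dots> \<le> (\<Prod>b\<in>Basis. 1 + \<bar>a \<bullet> b\<bar>)"
      by (rule one_add_sum_le_prod_one_add) auto
    finally show ?thesis
      using std_gaussian_density_pos[of a]
      by (auto simp: std_gaussian_density_eq_prod F_def prod.distrib intro: mult_left_mono)
  qed
  have "(\<integral>\<^sup>+a. ennreal (1 + norm a) \<partial>(std_gaussian :: (real^'n) measure))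
      = (\<integral>\<^sup>+a. ennreal (std_gaussian_density (a :: real^'n) * (1 + norm a)) \<partial>lborel)"
    unfolding std_gaussian_eq_density
    by (subst nn_integral_density)
      (auto intro!: nn_integral_cong simp: ennreal_mult std_gaussian_density_pos[THEN less_imp_le])
  also have "\<dots> \<le> (\<integral>\<^sup>+a. (\<Prod>b\<in>(Basis :: (real^'n) set). ennreal (F (a \<bullet> b))) \<partial>lborel)"
    using bound F_nonneg by (intro nn_integral_mono) (simp add: prod_ennreal ennreal_leI)
  also have "\<dots> = (\<Prod>b\<in>(Basis :: (real^'n) set). \<integral>\<^sup>+t. ennreal (F t) \<partial>lborel)"
    by (rule nn_integral_lborel_prod) (auto simp: F_def)
  also have "\<dots> < \<infinity>"
    using F_finite by (simp add: power_less_top_ennreal)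
  finally show ?thesis .
qed

lemma finite_measure_std_gaussian: "finite_measure (std_gaussian :: (real^'n) measure)"
proof
  have "emeasure (std_gaussian :: (real^'n) measure) (space std_gaussian)
      = (\<integral>\<^sup>+a. 1 \<partial>(std_gaussian :: (real^'n) measure))"
    by simp
  also have "\<dots> \<le> (\<integral>\<^sup>+a. ennreal (1 + norm a) \<partial>(std_gaussian :: (real^'n) measure))"
    by (intro nn_integral_mono) simp
  finally have "emeasure (std_gaussian :: (real^'n) measure) (space std_gaussian)
      \<le> (\<integral>\<^sup>+a. ennreal (1 + norm a) \<partial>(std_gaussian :: (real^'n) measure))" .
  from le_less_trans[OF this nn_integral_std_gaussian_one_add_norm]
  show "emeasure (std_gaussian :: (real^'n) measure) (space std_gaussian) \<noteq> \<infinity>"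
    by simp
qed

interpretation std_gaussian: finite_measure "std_gaussian :: (real^'n) measure"
  by (rule finite_measure_std_gaussian)

lemma nn_integral_std_gaussian_norm:
  "(\<integral>\<^sup>+a. ennreal (norm a) \<partial>(std_gaussian :: (real^'n) measure)) < \<infinity>"
  apply (rule le_less_trans[OF _ nn_integral_std_gaussian_one_add_norm])
  apply (rule nn_integral_mono)
  apply (rule ennreal_leI)
  by simp

lemma emeasure_std_gaussian_open_pos:
  fixes A :: "(real^'n) set"
  assumes "open A" and "a \<in> A"
  shows "emeasure std_gaussian A > 0"
proof -
  obtain r where r: "r > 0" "ball a r \<subseteq> A"
    using assms open_contains_ball by blast
  have A: "A \<in> sets borel"
    using assms by simp
  have "0 < ennreal (Henstock_Kurzweil_Integration.content (ball a r))"
    using content_ball_pos[OF r(1)] by simp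
  also have "\<dots> = emeasure lborel (ball a r)"
    using emeasure_lborel_ball_finite[of a r] by (simp add: emeasure_eq_ennreal_measure)
  also have "\<dots> \<le> emeasure lborel A"
    using r A by (intro emeasure_mono) auto
  finally have "\<not> (AE x in lborel. x \<notin> A)"
    using A by (subst AE_iff_measurable[of A]) auto
  moreover have "AE x in lborel. x \<notin> A" if "emeasure std_gaussian A = 0"
  proof -
    have "A \<in> null_sets (density lborel (\<lambda>a. ennreal (std_gaussian_density a)))"
      using that A by (simp add: null_sets_def std_gaussian_eq_density[symmetric])
    then have "AE x in lborel. x \<in> A \<longrightarrow> ennreal (std_gaussian_density x) = 0"
      by (subst (asm) null_sets_density_iff) auto
    moreover have "ennreal (std_gaussian_density x) \<noteq> 0" for x
      by (metis std_gaussian_density_pos ennreal_eq_0_iff not_le)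
    ultimately show ?thesis
      by (metis (mono_tags, lifting) AE_mp AE_I2)
  qed
  ultimately show ?thesis
    by (auto simp: zero_less_iff_neq_zero)
qed

section \<open>The Gaussian pair measure\<close>

abbreviation gaussian_pair :: "((real^'n) \<times> (real^'m)) measure" where
  "gaussian_pair \<equiv> std_gaussian \<Otimes>\<^sub>M std_gaussian"

interpretation gaussian_pair: pair_sigma_finite "std_gaussian :: (real^'n) measure"
  "std_gaussian :: (real^'m) measure"
  by unfold_locales

lemma sets_gaussian_pair: "sets (gaussian_pair :: ((real^'n) \<times> (real^'m)) measure) = sets borel"
proof -
  have "sets (gaussian_pair :: ((real^'n) \<times> (real^'m)) measure) = sets (borel \<Otimes>\<^sub>M borel)"
    by (rule sets_pair_measure_cong) simp_all
  then show ?thesis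
    by (simp only: borel_prod)
qed

lemma space_gaussian_pair [simp]: "space (gaussian_pair :: ((real^'n) \<times> (real^'m)) measure) = UNIV"
  by (simp add: space_pair_measure)

lemma integrable_gaussian_pair_norm_mult:
  "integrable (gaussian_pair :: ((real^'n) \<times> (real^'m)) measure) (\<lambda>(a, b). norm a * norm b)"
proof (rule integrableI_bounded)
  have "(\<integral>\<^sup>+z. ennreal (norm (case z of (a, b) \<Rightarrow> norm a * norm b))
      \<partial>(gaussian_pair :: ((real^'n) \<times> (real^'m)) measure))
      = (\<integral>\<^sup>+a. \<integral>\<^sup>+b. ennreal (norm a) * ennreal (norm b) \<partial>(std_gaussian :: (real^'m) measure) \<partial>(std_gaussian :: (real^'n) measure))"
    by (subst std_gaussian.nn_integral_fst[symmetric]) (auto simp: ennreal_mult)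
  also have "\<dots> = (\<integral>\<^sup>+a. ennreal (norm a) \<partial>(std_gaussian :: (real^'n) measure))
      * (\<integral>\<^sup>+b. ennreal (norm b) \<partial>(std_gaussian :: (real^'m) measure))"
    by (simp add: nn_integral_cmult nn_integral_multc)
  also have "\<dots> < \<infinity>"
    using nn_integral_std_gaussian_norm[where 'n='n] nn_integral_std_gaussian_norm[where 'n='m]
    by (simp add: ennreal_mult_less_top)
  finally show "(\<integral>\<^sup>+z. ennreal (norm (case z of (a, b) \<Rightarrow> norm a * norm b))
      \<partial>(gaussian_pair :: ((real^'n) \<times> (real^'m)) measure)) < \<infinity>" .
qed measurable

lemma integrable_gaussian_pair_if_bounded:
  fixes g :: "(real^'n) \<times> (real^'m) \<Rightarrow> real"
  assumes "g \<in> borel_measurable gaussian_pair"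
    and "\<And>a b. \<bar>g (a, b)\<bar> \<le> C * (norm a * norm b)"
  shows "integrable gaussian_pair g"
proof (rule Bochner_Integration.integrable_bound)
  show "integrable gaussian_pair (\<lambda>z. C * (case z of (a, b) \<Rightarrow> norm a * norm b))"
    using integrable_gaussian_pair_norm_mult by (rule integrable_mult_right)
  show "AE z in gaussian_pair. norm (g z) \<le> norm (C * (case z of (a, b) \<Rightarrow> norm a * norm b))"
    using assms(2) by (intro AE_I2) (auto split: prod.split intro: order_trans[OF _ abs_ge_self])
qed (rule assms(1))

lemma abs_inner_mult_inner_le:
  "\<bar>(a \<bullet> p) * (q \<bullet> b)\<bar> \<le> (norm p * norm q) * (norm a * norm b)"
proof -
  have "\<bar>a \<bullet> p\<bar> * \<bar>q \<bullet> b\<bar> \<le> (norm a * norm p) * (norm q * norm b)"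
    using Cauchy_Schwarz_ineq2[of a p] Cauchy_Schwarz_ineq2[of q b] by (intro mult_mono) auto
  then show ?thesis
    by (simp add: abs_mult algebra_simps)
qed

lemma distr_gaussian_pair_orthogonal_transformation:
  fixes f :: "real^'n \<Rightarrow> real^'n" and g :: "real^'m \<Rightarrow> real^'m"
  assumes f: "orthogonal_transformation f" and g: "orthogonal_transformation g"
  shows "distr gaussian_pair gaussian_pair (\<lambda>(a, b). (f a, g b)) = gaussian_pair"
proof -
  note [measurable] = borel_measurable_orthogonal_transformation[OF f]
    borel_measurable_orthogonal_transformation[OF g]
  have "distr std_gaussian std_gaussian f \<Otimes>\<^sub>M distr std_gaussian std_gaussian g
     = distr gaussian_pair (std_gaussian \<Otimes>\<^sub>M std_gaussian) (\<lambda>(a, b). (f a, g b))"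
    by (rule pair_measure_distr)
      (auto simp: distr_std_gaussian_orthogonal_transformation[OF g]
        finite_measure_std_gaussian finite_measure.axioms(1))
  then show ?thesis
    by (simp add: distr_std_gaussian_orthogonal_transformation f g)
qed

lemma integral_gaussian_pair_orthogonal_transformation:
  fixes f :: "real^'n \<Rightarrow> real^'n" and g :: "real^'m \<Rightarrow> real^'m"
    and h :: "(real^'n) \<times> (real^'m) \<Rightarrow> real"
  assumes f: "orthogonal_transformation f" and g: "orthogonal_transformation g"
    and [measurable]: "h \<in> borel_measurable gaussian_pair"
  shows "integral\<^sup>L gaussian_pair h = integral\<^sup>L gaussian_pair (\<lambda>(a, b). h (f a, g b))"
proof -
  note [measurable] = borel_measurable_orthogonal_transformation[OF f]
    borel_measurable_orthogonal_transformation[OF g]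
  have "integral\<^sup>L gaussian_pair h
      = integral\<^sup>L (distr gaussian_pair gaussian_pair (\<lambda>(a, b). (f a, g b))) h"
    by (simp add: distr_gaussian_pair_orthogonal_transformation f g)
  also have "\<dots> = integral\<^sup>L gaussian_pair (\<lambda>z. h (case z of (a, b) \<Rightarrow> (f a, g b)))"
    by (rule integral_distr) measurable
  finally show ?thesis
    by (simp add: case_prod_unfold)
qed

lemma integral_gaussian_pair_odd:
  fixes f :: "real^'n \<Rightarrow> real^'n" and g :: "real^'m \<Rightarrow> real^'m"
    and h :: "(real^'n) \<times> (real^'m) \<Rightarrow> real"
  assumes "orthogonal_transformation f" and "orthogonal_transformation g"
    and "h \<in> borel_measurable gaussian_pair" and "\<And>a b. h (f a, g b) = - h (a, b)"
  shows "integral\<^sup>L gaussian_pair h = 0"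
proof -
  have "integral\<^sup>L gaussian_pair h = integral\<^sup>L gaussian_pair (\<lambda>z. - h z)"
    using integral_gaussian_pair_orthogonal_transformation[OF assms(1-3)] assms(4)
    by (simp add: case_prod_unfold)
  then show ?thesis
    by simp
qed

lemma emeasure_gaussian_pair_open_pos:
  fixes U :: "((real^'n) \<times> (real^'m)) set"
  assumes "open U" and "z \<in> U"
  shows "emeasure gaussian_pair U > 0"
proof -
  obtain A B where AB: "open A" "open B" "z \<in> A \<times> B" "A \<times> B \<subseteq> U"
    using assms by (rule open_prod_elim) blast
  have "0 < emeasure (std_gaussian :: (real^'n) measure) A * emeasure (std_gaussian :: (real^'m) measure) B"
    using AB emeasure_std_gaussian_open_pos[of A "fst z"] emeasure_std_gaussian_open_pos[of B "snd z"]
    by (auto simp: mem_Times_iff ennreal_zero_less_mult_iff)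
  also have "\<dots> = emeasure gaussian_pair (A \<times> B)"
    using AB by (simp add: std_gaussian.emeasure_pair_measure_Times)
  also have "\<dots> \<le> emeasure gaussian_pair U"
  proof (rule emeasure_mono)
    have "U \<in> sets borel"
      using assms(1) by simp
    then show "U \<in> sets gaussian_pair"
      by (simp only: sets_gaussian_pair)
  qed (rule AB(4))
  finally show ?thesis .
qed

lemma integral_gaussian_pair_pos:
  fixes h :: "(real^'n) \<times> (real^'m) \<Rightarrow> real"
  assumes "continuous_on UNIV h" and "\<And>z. h z \<ge> 0" and "integrable gaussian_pair h"
    and "h z > 0"
  shows "integral\<^sup>L gaussian_pair h > 0"
proof -
  let ?U = "{z. 0 < h z}"
  have "open ?U"
    using assms(1) by (simp add: open_Collect_less continuous_on_const)
  then have "?U \<in> sets borel"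
    by simp
  then have "?U \<in> sets gaussian_pair"
    by (simp only: sets_gaussian_pair)
  moreover have "emeasure gaussian_pair ?U > 0"
    using \<open>open ?U\<close> assms(4) by (intro emeasure_gaussian_pair_open_pos) auto
  ultimately have "\<not> (AE z in gaussian_pair. h z = 0)"
    using assms(2) by (subst AE_iff_measurable[of ?U]) (auto simp: less_le)
  then have "integral\<^sup>L gaussian_pair h \<noteq> 0"
    using integral_nonneg_eq_0_iff_AE[OF assms(3)] assms(2) by simp
  then show ?thesis
    using assms(2) by (simp add: less_le integral_nonneg)
qed

section \<open>The population objective\<close>

lemma outer_mult_vec: "outer w x *v b = (x \<bullet> b) *\<^sub>R w"
  by (simp add: vec_eq_iff outer_def matrix_vector_mult_def inner_vec_def sum_distrib_left
      mult.commute mult.left_commute)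

lemma outer_eq_0_iff: "outer w x = 0 \<longleftrightarrow> w = 0 \<or> x = 0"
proof
  assume "outer w x = 0"
  then show "w = 0 \<or> x = 0"
    by (metis (no_types, lifting) outer_def mult_eq_0_iff vec_eq_iff vec_lambda_beta zero_index)
qed (auto simp: outer_def vec_eq_iff)

lemma fP_eq:
  "fP wb xb (w, x) = (\<integral>(a, b). \<bar>(a \<bullet> w) * (x \<bullet> b) - (a \<bullet> wb) * (xb \<bullet> b)\<bar> \<partial>gaussian_pair)"
  by (simp add: fP_def matrix_vector_mult_diff_rdistrib outer_mult_vec inner_diff_right mult.commute)

lemma integrable_fP_integrand:
  fixes wb w :: "real^'n" and xb x :: "real^'m"
  shows "integrable gaussian_pair (\<lambda>(a, b). \<bar>(a \<bullet> w) * (x \<bullet> b) - (a \<bullet> wb) * (xb \<bullet> b)\<bar>)"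
proof (rule integrable_gaussian_pair_if_bounded[where C="norm w * norm x + norm wb * norm xb"])
  fix a :: "real^'n" and b :: "real^'m"
  have "\<bar>(a \<bullet> w) * (x \<bullet> b) - (a \<bullet> wb) * (xb \<bullet> b)\<bar> \<le> \<bar>(a \<bullet> w) * (x \<bullet> b)\<bar> + \<bar>(a \<bullet> wb) * (xb \<bullet> b)\<bar>"
    by (rule abs_triangle_ineq4)
  also have "\<dots> \<le> (norm w * norm x + norm wb * norm xb) * (norm a * norm b)"
    using abs_inner_mult_inner_le[of a w x b] abs_inner_mult_inner_le[of a wb xb b]
    by (simp add: algebra_simps)
  finally show "\<bar>case (a, b) of (a, b) \<Rightarrow> \<bar>(a \<bullet> w) * (x \<bullet> b) - (a \<bullet> wb) * (xb \<bullet> b)\<bar>\<bar>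
      \<le> (norm w * norm x + norm wb * norm xb) * (norm a * norm b)"
    by simp
qed measurable

lemma fP_nonneg: "0 \<le> fP wb xb z"
  by (cases z) (simp add: fP_eq case_prod_unfold)

lemma fP_swap:
  fixes wb w :: "real^'n" and xb x :: "real^'m"
  shows "fP wb xb (w, x) = fP xb wb (x, w)"
proof -
  let ?f = "\<lambda>(a::real^'n, b::real^'m). \<bar>(a \<bullet> w) * (x \<bullet> b) - (a \<bullet> wb) * (xb \<bullet> b)\<bar>"
  have "fP wb xb (w, x) = integral\<^sup>L (distr gaussian_pair gaussian_pair (\<lambda>(b, a). (a, b))) ?f"
    by (simp add: fP_eq gaussian_pair.distr_pair_swap[symmetric])
  also have "\<dots> = integral\<^sup>L gaussian_pair (\<lambda>z. ?f (case z of (b, a) \<Rightarrow> (a, b)))"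
    by (rule integral_distr) measurable
  also have "\<dots> = fP xb wb (x, w)"
    unfolding fP_eq by (intro Bochner_Integration.integral_cong refl)
      (auto simp: inner_commute mult.commute)
  finally show ?thesis .
qed

lemma fP_diff_le:
  fixes wb w w' :: "real^'n" and xb x x' :: "real^'m"
  shows "\<bar>fP wb xb (w', x') - fP wb xb (w, x)\<bar>
    \<le> (\<integral>(a, b). norm a * norm b \<partial>(gaussian_pair :: ((real^'n) \<times> (real^'m)) measure))
      * (norm (w' - w) * norm x' + norm w * norm (x' - x))"
proof -
  define c where "c = norm (w' - w) * norm x' + norm w * norm (x' - x)"
  let ?u' = "\<lambda>(a::real^'n, b::real^'m). \<bar>(a \<bullet> w') * (x' \<bullet> b) - (a \<bullet> wb) * (xb \<bullet> b)\<bar>"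
  let ?u = "\<lambda>(a::real^'n, b::real^'m). \<bar>(a \<bullet> w) * (x \<bullet> b) - (a \<bullet> wb) * (xb \<bullet> b)\<bar>"
  have pointwise: "\<bar>?u' (a, b) - ?u (a, b)\<bar> \<le> c * (norm a * norm b)" for a b
  proof -
    have "(a \<bullet> w') * (x' \<bullet> b) - (a \<bullet> w) * (x \<bullet> b) = (a \<bullet> (w' - w)) * (x' \<bullet> b) + (a \<bullet> w) * ((x' - x) \<bullet> b)"
      by (simp add: inner_diff_right inner_diff_left algebra_simps)
    then have "\<bar>?u' (a, b) - ?u (a, b)\<bar> \<le> \<bar>(a \<bullet> (w' - w)) * (x' \<bullet> b)\<bar> + \<bar>(a \<bullet> w) * ((x' - x) \<bullet> b)\<bar>"
      by simp
    also have "\<dots> \<le> c * (norm a * norm b)"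
      using abs_inner_mult_inner_le[of a "w' - w" x' b] abs_inner_mult_inner_le[of a w "x' - x" b]
      by (simp add: c_def algebra_simps)
    finally show ?thesis .
  qed
  have "fP wb xb (w', x') - fP wb xb (w, x) = integral\<^sup>L gaussian_pair (\<lambda>z. ?u' z - ?u z)"
    unfolding fP_eq by (rule Bochner_Integration.integral_diff[symmetric]) (rule integrable_fP_integrand)+
  also have "\<bar>\<dots>\<bar> \<le> integral\<^sup>L gaussian_pair (\<lambda>z. \<bar>?u' z - ?u z\<bar>)"
    using integral_norm_bound[of gaussian_pair "\<lambda>z. ?u' z - ?u z"] by simp
  also have "\<dots> \<le> integral\<^sup>L gaussian_pair (\<lambda>(a::real^'n, b::real^'m). c * (norm a * norm b))"
  proof (rule Bochner_Integration.integral_mono)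
    show "integrable gaussian_pair (\<lambda>z. \<bar>?u' z - ?u z\<bar>)"
      by (intro integrable_abs Bochner_Integration.integrable_diff integrable_fP_integrand)
    show "integrable gaussian_pair (\<lambda>(a::real^'n, b::real^'m). c * (norm a * norm b))"
      using integrable_gaussian_pair_norm_mult[THEN integrable_mult_right, of c]
      by (simp add: case_prod_unfold)
  qed (use pointwise in \<open>simp add: case_prod_unfold\<close>)
  also have "\<dots> = (\<integral>(a, b). norm a * norm b \<partial>(gaussian_pair :: ((real^'n) \<times> (real^'m)) measure)) * c"
    by (simp add: case_prod_unfold mult.commute)
  finally show ?thesis
    by (simp add: c_def)
qed

lemma isCont_fP:
  fixes wb :: "real^'n" and xb :: "real^'m"
  shows "isCont (fP wb xb) z"
proof -
  obtain w x where z: "z = (w, x)"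
    by (cases z)
  define K where "K = (\<integral>(a, b). norm a * norm b \<partial>(gaussian_pair :: ((real^'n) \<times> (real^'m)) measure))"
  let ?g = "\<lambda>y. K * (norm (fst y - w) * norm (snd y) + norm w * norm (snd y - x))"
  have "(?g \<longlongrightarrow> ?g z) (at z)"
    by (intro tendsto_intros)
  then have "(?g \<longlongrightarrow> 0) (at z)"
    by (simp add: z)
  moreover have "\<forall>\<^sub>F y in at z. norm (fP wb xb y - fP wb xb z) \<le> ?g y"
    by (intro always_eventually) (simp add: split_paired_All z K_def fP_diff_le)
  ultimately have "((\<lambda>y. fP wb xb y - fP wb xb z) \<longlongrightarrow> 0) (at z)"
    by (rule Lim_null_comparison[rotated])
  then show ?thesis
    by (simp add: isCont_def LIM_zero_iff)
qed

lemma fP_convex_snd: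
  assumes "0 \<le> t" and "t \<le> 1"
  shows "fP wb xb (w, x + t *\<^sub>R d) \<le> (1 - t) * fP wb xb (w, x) + t * fP wb xb (w, x + d)"
proof -
  let ?r = "\<lambda>x (a, b). (a \<bullet> w) * (x \<bullet> b) - (a \<bullet> wb) * (xb \<bullet> b)"
  have "?r (x + t *\<^sub>R d) z = (1 - t) * ?r x z + t * ?r (x + d) z" for z
    by (cases z) (simp add: inner_add_left algebra_simps)
  then have pointwise: "\<bar>?r (x + t *\<^sub>R d) z\<bar> \<le> (1 - t) * \<bar>?r x z\<bar> + t * \<bar>?r (x + d) z\<bar>" for z
    using abs_triangle_ineq[of "(1 - t) * ?r x z" "t * ?r (x + d) z"] assms
    by (simp add: abs_mult)
  have "fP wb xb (w, x + t *\<^sub>R d)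
      \<le> integral\<^sup>L gaussian_pair (\<lambda>z. (1 - t) * \<bar>?r x z\<bar> + t * \<bar>?r (x + d) z\<bar>)"
    unfolding fP_eq
  proof (rule Bochner_Integration.integral_mono)
    show "integrable gaussian_pair (\<lambda>z. (1 - t) * \<bar>?r x z\<bar> + t * \<bar>?r (x + d) z\<bar>)"
      using integrable_fP_integrand[of w x wb xb] integrable_fP_integrand[of w "x + d" wb xb]
      by (intro Bochner_Integration.integrable_add integrable_mult_right) (simp_all add: case_prod_unfold)
  qed (use pointwise integrable_fP_integrand in \<open>simp_all add: case_prod_unfold\<close>)
  also have "\<dots> = (1 - t) * fP wb xb (w, x) + t * fP wb xb (w, x + d)"
    using integrable_fP_integrand[of w x wb xb] integrable_fP_integrand[of w "x + d" wb xb]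
    by (subst Bochner_Integration.integral_add)
      (auto simp: fP_eq case_prod_unfold intro!: integrable_mult_right)
  finally show ?thesis .
qed

lemma fP_convex_fst:
  assumes "0 \<le> t" and "t \<le> 1"
  shows "fP wb xb (w + t *\<^sub>R d, x) \<le> (1 - t) * fP wb xb (w, x) + t * fP wb xb (w + d, x)"
  using fP_convex_snd[OF assms, of xb wb x w d] by (simp add: fP_swap[of wb xb])

lemma integral_abs_less_if_reflection_symmetric:
  fixes p q :: "(real^'n) \<times> (real^'m) \<Rightarrow> real"
  assumes "continuous_on UNIV p" and "continuous_on UNIV q"
    and "integrable gaussian_pair (\<lambda>z. \<bar>p z\<bar>)"
    and "integrable gaussian_pair (\<lambda>z. \<bar>p z + q z\<bar>)"
    and "integrable gaussian_pair (\<lambda>z. \<bar>p z - q z\<bar>)"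
    and symmetric: "(\<integral>z. \<bar>p z + q z\<bar> \<partial>gaussian_pair) = (\<integral>z. \<bar>p z - q z\<bar> \<partial>gaussian_pair)"
    and "p z = 0" and "q z \<noteq> 0"
  shows "(\<integral>z. \<bar>p z\<bar> \<partial>gaussian_pair) < (\<integral>z. \<bar>p z + q z\<bar> \<partial>gaussian_pair)"
proof -
  let ?h = "\<lambda>z. \<bar>p z + q z\<bar> + \<bar>p z - q z\<bar> - 2 * \<bar>p z\<bar>"
  have "integral\<^sup>L gaussian_pair ?h > 0"
    using assms by (intro integral_gaussian_pair_pos[of ?h z] continuous_intros) auto
  moreover have "integral\<^sup>L gaussian_pair ?h = (\<integral>z. \<bar>p z + q z\<bar> \<partial>gaussian_pair)
      + (\<integral>z. \<bar>p z - q z\<bar> \<partial>gaussian_pair) - 2 * (\<integral>z. \<bar>p z\<bar> \<partial>gaussian_pair)"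
    using assms(3-5) by simp
  ultimately show ?thesis
    using symmetric by simp
qed

lemma fP_snd_projection_less:
  fixes wb w :: "real^'n" and xb x :: "real^'m"
  assumes "w \<noteq> 0" and "x \<noteq> ((w \<bullet> wb) / (w \<bullet> w)) *\<^sub>R xb"
  shows "fP wb xb (w, ((w \<bullet> wb) / (w \<bullet> w)) *\<^sub>R xb) < fP wb xb (w, x)"
proof -
  define \<rho> where "\<rho> = (w \<bullet> wb) / (w \<bullet> w)"
  define y where "y = x - \<rho> *\<^sub>R xb"
  define r where "r x' z = (fst z \<bullet> w) * (x' \<bullet> snd z) - (fst z \<bullet> wb) * (xb \<bullet> snd z)" for x' z
  define q where "q z = (fst z \<bullet> w) * (y \<bullet> snd z)" for z
  have x: "x = \<rho> *\<^sub>R xb + y"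
    by (simp add: y_def)
  have r_add: "r (\<rho> *\<^sub>R xb + y) z = r (\<rho> *\<^sub>R xb) z + q z"
    and r_diff: "r (\<rho> *\<^sub>R xb - y) z = r (\<rho> *\<^sub>R xb) z - q z" for z
    by (simp_all add: r_def q_def inner_add_left inner_diff_left algebra_simps)
  have fP_r: "fP wb xb (w, x') = (\<integral>z. \<bar>r x' z\<bar> \<partial>gaussian_pair)" for x'
    by (simp add: fP_eq r_def case_prod_unfold)
  have integrable_r: "integrable gaussian_pair (\<lambda>z. \<bar>r x' z\<bar>)" for x'
    using integrable_fP_integrand[of w x' wb xb] by (simp add: r_def case_prod_unfold)
  have reflect: "r (\<rho> *\<^sub>R xb + y) (householder w a, b) = r (\<rho> *\<^sub>R xb - y) (a, b)" for a b
  proof -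
    have "householder w a \<bullet> wb = a \<bullet> wb - 2 * \<rho> * (a \<bullet> w)"
      using assms(1) by (simp add: householder_def inner_diff_left \<rho>_def field_simps)
    note this [simp]
    show ?thesis
      by (simp add: r_def inner_add_left inner_diff_left algebra_simps)
  qed
  have "(\<integral>z. \<bar>r (\<rho> *\<^sub>R xb + y) z\<bar> \<partial>gaussian_pair)
      = (\<integral>(a, b). \<bar>r (\<rho> *\<^sub>R xb + y) (householder w a, b)\<bar> \<partial>gaussian_pair)"
    by (rule integral_gaussian_pair_orthogonal_transformation[OF orthogonal_transformation_householder
          orthogonal_transformation_id borel_measurable_integrable[OF integrable_r]])
  also have "\<dots> = (\<integral>z. \<bar>r (\<rho> *\<^sub>R xb - y) z\<bar> \<partial>gaussian_pair)"
    by (simp add: reflect case_prod_unfold)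
  finally have "(\<integral>z. \<bar>r (\<rho> *\<^sub>R xb + y) z\<bar> \<partial>gaussian_pair)
      = (\<integral>z. \<bar>r (\<rho> *\<^sub>R xb - y) z\<bar> \<partial>gaussian_pair)" .
  moreover have "r (\<rho> *\<^sub>R xb) (w, y) = 0"
    using assms(1) by (simp add: r_def \<rho>_def inner_commute)
  moreover have "q (w, y) \<noteq> 0"
    using assms by (simp add: q_def y_def \<rho>_def)
  ultimately have "(\<integral>z. \<bar>r (\<rho> *\<^sub>R xb) z\<bar> \<partial>gaussian_pair) < (\<integral>z. \<bar>r (\<rho> *\<^sub>R xb + y) z\<bar> \<partial>gaussian_pair)"
    using integrable_r[of "\<rho> *\<^sub>R xb"] integrable_r[of "\<rho> *\<^sub>R xb + y"] integrable_r[of "\<rho> *\<^sub>R xb - y"]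
    unfolding r_add r_diff
    by (intro integral_abs_less_if_reflection_symmetric[where z="(w, y)"])
      (auto simp: r_def q_def intro!: continuous_intros)
  then show ?thesis
    unfolding fP_r \<rho>_def[symmetric] x .
qed

lemma fP_fst_projection_less:
  fixes wb w :: "real^'n" and xb x :: "real^'m"
  assumes "x \<noteq> 0" and "w \<noteq> ((x \<bullet> xb) / (x \<bullet> x)) *\<^sub>R wb"
  shows "fP wb xb (((x \<bullet> xb) / (x \<bullet> x)) *\<^sub>R wb, x) < fP wb xb (w, x)"
  using fP_snd_projection_less[OF assms] by (simp add: fP_swap[of wb xb])

lemma integrable_gaussian_pair_bounded_mult_bilinear:
  fixes c :: "(real^'n) \<times> (real^'m) \<Rightarrow> real" and p :: "real^'n" and q :: "real^'m"
  assumes "c \<in> borel_measurable gaussian_pair" and "\<And>z. \<bar>c z\<bar> \<le> 1"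
  shows "integrable gaussian_pair (\<lambda>z. c z * ((fst z \<bullet> p) * (q \<bullet> snd z)))"
proof (rule integrable_gaussian_pair_if_bounded[where C="norm p * norm q"])
  fix a :: "real^'n" and b :: "real^'m"
  have "\<bar>c (a, b) * ((a \<bullet> p) * (q \<bullet> b))\<bar> \<le> 1 * \<bar>(a \<bullet> p) * (q \<bullet> b)\<bar>"
    unfolding abs_mult[of "c (a, b)"] by (intro mult_right_mono assms(2)) simp
  then show "\<bar>c (a, b) * ((fst (a, b) \<bullet> p) * (q \<bullet> snd (a, b)))\<bar> \<le> norm p * norm q * (norm a * norm b)"
    using abs_inner_mult_inner_le[of a p q b] by simp
qed (use assms(1) in measurable)

lemma integral_sgn_mult_bilinear_eq_0:
  fixes wb p :: "real^'n" and xb q :: "real^'m"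
  assumes "p \<bullet> wb = 0 \<or> q \<bullet> xb = 0"
  shows "(\<integral>(a, b). sgn ((a \<bullet> wb) * (xb \<bullet> b)) * ((a \<bullet> p) * (q \<bullet> b)) \<partial>gaussian_pair) = 0"
proof -
  let ?h = "\<lambda>(a::real^'n, b::real^'m). sgn ((a \<bullet> wb) * (xb \<bullet> b)) * ((a \<bullet> p) * (q \<bullet> b))"
  have measurable: "?h \<in> borel_measurable gaussian_pair"
    by measurable
  from assms show "integral\<^sup>L gaussian_pair ?h = 0"
  proof
    assume "p \<bullet> wb = 0"
    then have "householder p a \<bullet> wb = a \<bullet> wb" for a
      using householder_inner_orthogonal[of wb p a] by (simp add: inner_commute)
    then show ?thesis
      by (intro integral_gaussian_pair_odd[OF orthogonal_transformation_householder[of p]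
            orthogonal_transformation_id measurable]) simp
  next
    assume "q \<bullet> xb = 0"
    then have "xb \<bullet> householder q b = xb \<bullet> b" and "q \<bullet> householder q b = - (q \<bullet> b)" for b
      using householder_inner_orthogonal[of xb q b] householder_inner_self[of q b]
      by (simp_all add: inner_commute)
    then show ?thesis
      by (intro integral_gaussian_pair_odd[OF orthogonal_transformation_id
            orthogonal_transformation_householder[of q] measurable]) simp
  qed
qed

text \<open>Split \<open>w\<close> and \<open>x\<close> into their components along \<open>wb\<close>, \<open>xb\<close> and orthogonal to them;
  only the product of the two parallel components survives integration.\<close>

lemma integral_sgn_mult_bilinear:
  fixes wb w :: "real^'n" and xb x :: "real^'m"
  shows "(\<integral>(a, b). sgn ((a \<bullet> wb) * (xb \<bullet> b)) * ((a \<bullet> w) * (x \<bullet> b)) \<partial>gaussian_pair)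
    = (w \<bullet> wb) / (wb \<bullet> wb) * ((x \<bullet> xb) / (xb \<bullet> xb))
      * (\<integral>(a, b). \<bar>(a \<bullet> wb) * (xb \<bullet> b)\<bar> \<partial>gaussian_pair)"
proof -
  define t where "t = (w \<bullet> wb) / (wb \<bullet> wb)"
  define \<sigma> where "\<sigma> = (x \<bullet> xb) / (xb \<bullet> xb)"
  define wp where "wp = w - t *\<^sub>R wb"
  define xp where "xp = x - \<sigma> *\<^sub>R xb"
  define s where "s z = sgn ((fst z \<bullet> wb) * (xb \<bullet> snd z))" for z :: "(real^'n) \<times> (real^'m)"
  have wp: "wp \<bullet> wb = 0" and xp: "xp \<bullet> xb = 0"
    by (cases "wb = 0", simp_all add: wp_def t_def inner_diff_left)
      (cases "xb = 0", simp_all add: xp_def \<sigma>_def inner_diff_left)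
  have s_measurable [measurable]: "s \<in> borel_measurable gaussian_pair"
    unfolding s_def by measurable
  have s_bounded: "\<bar>s z\<bar> \<le> 1" for z
    by (simp add: s_def sgn_real_def)
  have decompose: "s z * ((fst z \<bullet> w) * (x \<bullet> snd z))
      = t * \<sigma> * \<bar>(fst z \<bullet> wb) * (xb \<bullet> snd z)\<bar>
        + t * (s z * ((fst z \<bullet> wb) * (xp \<bullet> snd z))) + s z * ((fst z \<bullet> wp) * (x \<bullet> snd z))" for z
  proof -
    have "(fst z \<bullet> w) * (x \<bullet> snd z) = t * \<sigma> * ((fst z \<bullet> wb) * (xb \<bullet> snd z))
        + t * ((fst z \<bullet> wb) * (xp \<bullet> snd z)) + (fst z \<bullet> wp) * (x \<bullet> snd z)"
      by (simp add: wp_def xp_def inner_diff_left inner_diff_right algebra_simps)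
    moreover have "s z * ((fst z \<bullet> wb) * (xb \<bullet> snd z)) = \<bar>(fst z \<bullet> wb) * (xb \<bullet> snd z)\<bar>"
      by (simp only: s_def abs_sgn mult.commute)
    ultimately show ?thesis
      by (simp add: distrib_left mult.left_commute)
  qed
  have odd: "(\<integral>z. s z * ((fst z \<bullet> wb) * (xp \<bullet> snd z)) \<partial>gaussian_pair) = 0"
    "(\<integral>z. s z * ((fst z \<bullet> wp) * (x \<bullet> snd z)) \<partial>gaussian_pair) = 0"
    using integral_sgn_mult_bilinear_eq_0[where p=wb and q=xp]
      integral_sgn_mult_bilinear_eq_0[where p=wp and q=x] wp xp
    by (simp_all add: s_def case_prod_unfold inner_commute)
  have "integrable gaussian_pair (\<lambda>z. \<bar>(fst z \<bullet> wb) * (xb \<bullet> snd z)\<bar>)"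
    using integrable_fP_integrand[of 0 0 wb xb] by (simp add: case_prod_unfold inner_commute)
  then have "(\<integral>z. s z * ((fst z \<bullet> w) * (x \<bullet> snd z)) \<partial>gaussian_pair)
      = t * \<sigma> * (\<integral>z. \<bar>(fst z \<bullet> wb) * (xb \<bullet> snd z)\<bar> \<partial>gaussian_pair)"
    using odd
      integrable_gaussian_pair_bounded_mult_bilinear[OF s_measurable s_bounded, of wb xp]
      integrable_gaussian_pair_bounded_mult_bilinear[OF s_measurable s_bounded, of wp x]
    by (simp add: decompose Bochner_Integration.integral_add Bochner_Integration.integrable_add)
  then show ?thesis
    by (simp add: s_def case_prod_unfold t_def \<sigma>_def)
qed

lemma fP_lower_bound:
  fixes wb w :: "real^'n" and xb x :: "real^'m"
  shows "(1 - (w \<bullet> wb) / (wb \<bullet> wb) * ((x \<bullet> xb) / (xb \<bullet> xb)))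
      * (\<integral>(a, b). \<bar>(a \<bullet> wb) * (xb \<bullet> b)\<bar> \<partial>gaussian_pair)
    \<le> fP wb xb (w, x)"
proof -
  define v where "v z = (fst z \<bullet> wb) * (xb \<bullet> snd z)" for z :: "(real^'n) \<times> (real^'m)"
  define u where "u z = (fst z \<bullet> w) * (x \<bullet> snd z)" for z :: "(real^'n) \<times> (real^'m)"
  have integrable_v: "integrable gaussian_pair (\<lambda>z. \<bar>v z\<bar>)"
    using integrable_fP_integrand[of 0 0 wb xb] by (simp add: v_def case_prod_unfold inner_commute)
  have integrable_sgn_u: "integrable gaussian_pair (\<lambda>z. sgn (v z) * u z)"
    unfolding u_def
    by (rule integrable_gaussian_pair_bounded_mult_bilinear) (auto simp: v_def sgn_real_def)
  have "(1 - (w \<bullet> wb) / (wb \<bullet> wb) * ((x \<bullet> xb) / (xb \<bullet> xb))) * (\<integral>z. \<bar>v z\<bar> \<partial>gaussian_pair)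
      = (\<integral>z. \<bar>v z\<bar> - sgn (v z) * u z \<partial>gaussian_pair)"
    using integral_sgn_mult_bilinear[of wb xb w x] integrable_v integrable_sgn_u
    by (simp add: u_def v_def case_prod_unfold left_diff_distrib)
  also have "\<dots> \<le> (\<integral>z. \<bar>u z - v z\<bar> \<partial>gaussian_pair)"
  proof (rule Bochner_Integration.integral_mono)
    show "integrable gaussian_pair (\<lambda>z. \<bar>v z\<bar> - sgn (v z) * u z)"
      using integrable_v integrable_sgn_u by (rule Bochner_Integration.integrable_diff)
    show "integrable gaussian_pair (\<lambda>z. \<bar>u z - v z\<bar>)"
      using integrable_fP_integrand[of w x wb xb] by (simp add: u_def v_def case_prod_unfold)
    show "\<bar>v z\<bar> - sgn (v z) * u z \<le> \<bar>u z - v z\<bar>" for z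
      by (cases "v z > 0"; cases "v z < 0") (auto simp: sgn_real_def)
  qed
  also have "\<dots> = fP wb xb (w, x)"
    by (simp add: fP_eq u_def v_def case_prod_unfold)
  finally show ?thesis
    by (simp add: v_def case_prod_unfold)
qed

lemma abs_inner_divide_inner_self_le:
  fixes e p p' :: "'a::real_inner"
  assumes "e \<noteq> 0" and "p \<bullet> e = 0"
  shows "\<bar>(p' \<bullet> e) / (e \<bullet> e)\<bar> \<le> norm (p' - p) / norm e"
proof -
  have "\<bar>p' \<bullet> e\<bar> \<le> norm (p' - p) * norm e"
    using Cauchy_Schwarz_ineq2[of "p' - p" e] assms(2) by (simp add: inner_diff_left)
  then show ?thesis
    using assms(1) by (simp add: abs_div power2_norm_eq_inner[symmetric] field_simps power2_eq_square)
qed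

lemma fP_quadratic_minorant:
  fixes wb w w' :: "real^'n" and xb x x' :: "real^'m"
  assumes "wb \<noteq> 0" and "xb \<noteq> 0" and "w \<bullet> wb = 0" and "x \<bullet> xb = 0" and "w = 0 \<or> x = 0"
  shows "fP wb xb (w, x) - fP wb xb (w, x) / (norm wb * norm xb) * (norm (w' - w) * norm (x' - x))
    \<le> fP wb xb (w', x')"
proof -
  define V where "V = (\<integral>(a, b). \<bar>(a \<bullet> wb) * (xb \<bullet> b)\<bar> \<partial>gaussian_pair)"
  define \<kappa> where "\<kappa> = (w' \<bullet> wb) / (wb \<bullet> wb) * ((x' \<bullet> xb) / (xb \<bullet> xb))"
  have V: "fP wb xb (w, x) = V"
    using assms(5) by (auto simp: fP_eq V_def inner_commute)
  have "V \<ge> 0"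
    by (simp add: V_def case_prod_unfold)
  have "\<kappa> * V \<le> \<bar>\<kappa>\<bar> * V"
    using \<open>V \<ge> 0\<close> by (intro mult_right_mono) auto
  also have "\<dots> \<le> (norm (w' - w) / norm wb) * (norm (x' - x) / norm xb) * V"
  proof (rule mult_right_mono)
    show "\<bar>\<kappa>\<bar> \<le> norm (w' - w) / norm wb * (norm (x' - x) / norm xb)"
      unfolding \<kappa>_def abs_mult
      using abs_inner_divide_inner_self_le[OF assms(1,3), of w']
        abs_inner_divide_inner_self_le[OF assms(2,4), of x']
      by (intro mult_mono) auto
  qed (rule \<open>V \<ge> 0\<close>)
  finally show ?thesis
    using fP_lower_bound[of w' wb x' xb] V by (simp add: V_def \<kappa>_def field_simps)
qed

section \<open>Frechet and limiting subgradients\<close>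

lemma limiting_subdiff_if_frechet_subgrad:
  assumes "frechet_subgrad h z \<xi>"
  shows "\<xi> \<in> limiting_subdiff h z"
  unfolding limiting_subdiff_def using assms
  by (intro CollectI exI[of _ "\<lambda>n. z"] exI[of _ "\<lambda>n. \<xi>"]) auto

lemma frechet_subgrad_zero_if_quadratic_minorant:
  fixes h :: "'a::real_inner \<Rightarrow> real"
  assumes minorant: "\<And>y. h z - M * (norm (y - z))\<^sup>2 \<le> h y" and "M \<ge> 0"
  shows "frechet_subgrad h z 0"
  unfolding frechet_subgrad_def
proof (intro allI impI)
  fix \<epsilon> :: real
  assume "\<epsilon> > 0"
  show "\<forall>\<^sub>F y in at z. h z + 0 \<bullet> (y - z) - \<epsilon> * norm (y - z) \<le> h y"
    unfolding eventually_at
  proof (intro exI[of _ "\<epsilon> / (M + 1)"] conjI ballI impI)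
    show "\<epsilon> / (M + 1) > 0"
      using \<open>\<epsilon> > 0\<close> \<open>M \<ge> 0\<close> by simp
    fix y
    assume "y \<noteq> z \<and> dist y z < \<epsilon> / (M + 1)"
    then have "norm (y - z) \<le> \<epsilon> / (M + 1)"
      by (simp add: dist_norm)
    then have "norm (y - z) * norm (y - z) \<le> \<epsilon> / (M + 1) * norm (y - z)"
      by (rule mult_right_mono) simp
    then have "M * (norm (y - z))\<^sup>2 \<le> M * (\<epsilon> / (M + 1) * norm (y - z))"
      unfolding power2_eq_square using \<open>M \<ge> 0\<close> by (rule mult_left_mono)
    also have "\<dots> \<le> \<epsilon> * norm (y - z)"
      using \<open>\<epsilon> > 0\<close> \<open>M \<ge> 0\<close> by (simp add: field_simps)
    finally show "h z + 0 \<bullet> (y - z) - \<epsilon> * norm (y - z) \<le> h y"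
      using minorant[of y] by simp
  qed
qed

text \<open>Compare the subgradient inequality at \<open>z + t *\<^sub>R d\<close>, for small \<open>t > 0\<close>, with
  convexity on the segment.\<close>

lemma frechet_subgrad_decrease_le:
  fixes h :: "'a::real_inner \<Rightarrow> real"
  assumes frechet: "frechet_subgrad h z \<xi>"
    and convex: "\<And>t. 0 \<le> t \<Longrightarrow> t \<le> 1 \<Longrightarrow> h (z + t *\<^sub>R d) \<le> (1 - t) * h z + t * h (z + d)"
  shows "h z - h (z + d) \<le> norm \<xi> * norm d"
proof (rule field_le_epsilon)
  fix e :: real
  assume "e > 0"
  define \<epsilon> where "\<epsilon> = e / (norm d + 1)"
  have "norm d + 1 > 0"
    by (simp add: add_nonneg_pos)
  then have "\<epsilon> > 0"
    using \<open>e > 0\<close> by (simp add: \<epsilon>_def)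
  have "norm d / (norm d + 1) \<le> 1"
    using \<open>norm d + 1 > 0\<close> by simp
  then have \<epsilon>: "\<epsilon> * norm d \<le> e"
    using mult_left_mono[of "norm d / (norm d + 1)" 1 e] \<open>e > 0\<close> by (simp add: \<epsilon>_def)
  have "\<forall>\<^sub>F y in at z. h z + \<xi> \<bullet> (y - z) - \<epsilon> * norm (y - z) \<le> h y"
    using frechet \<open>\<epsilon> > 0\<close> unfolding frechet_subgrad_def by blast
  then obtain r where "r > 0"
    and r: "\<And>y. y \<noteq> z \<Longrightarrow> dist y z < r \<Longrightarrow> h z + \<xi> \<bullet> (y - z) - \<epsilon> * norm (y - z) \<le> h y"
    unfolding eventually_at by auto
  show "h z - h (z + d) \<le> norm \<xi> * norm d + e"
  proof (cases "d = 0")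
    case False
    define t where "t = min 1 (r / (2 * norm d))"
    have t: "0 < t" "t \<le> 1"
      using \<open>r > 0\<close> False by (auto simp: t_def)
    have "t * norm d \<le> r / (2 * norm d) * norm d"
      using False by (intro mult_right_mono) (auto simp: t_def)
    also have "\<dots> < r"
      using False \<open>r > 0\<close> by (simp add: field_simps)
    finally have "dist (z + t *\<^sub>R d) z < r"
      using t by (simp add: dist_norm)
    then have "h z + t * (\<xi> \<bullet> d) - \<epsilon> * (t * norm d) \<le> h (z + t *\<^sub>R d)"
      using r[of "z + t *\<^sub>R d"] t False by simp
    moreover have "t * (- (norm \<xi> * norm d)) \<le> t * (\<xi> \<bullet> d)"
      using Cauchy_Schwarz_ineq2[of \<xi> d] t by (intro mult_left_mono) auto
    moreover have "h (z + t *\<^sub>R d) \<le> h z - t * h z + t * h (z + d)"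
      using convex[OF less_imp_le[OF t(1)] t(2)] by (simp add: algebra_simps)
    ultimately have "t * (h z - h (z + d)) \<le> t * ((norm \<xi> + \<epsilon>) * norm d)"
      by (simp add: algebra_simps)
    then have "h z - h (z + d) \<le> (norm \<xi> + \<epsilon>) * norm d"
      using t by simp
    then show ?thesis
      using \<epsilon> by (simp add: distrib_right)
  qed (use \<open>e > 0\<close> in simp)
qed

lemma zero_notin_limiting_subdiff_if_descent:
  fixes h :: "'a::real_inner \<Rightarrow> real"
  assumes "isCont h z" and "isCont h (z + d)"
    and convex: "\<And>z' t. 0 \<le> t \<Longrightarrow> t \<le> 1 \<Longrightarrow> h (z' + t *\<^sub>R d) \<le> (1 - t) * h z' + t * h (z' + d)"
    and "h (z + d) < h z"
  shows "0 \<notin> limiting_subdiff h z"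
proof
  assume "0 \<in> limiting_subdiff h z"
  then obtain zs \<xi>s where zs: "zs \<longlonglongrightarrow> z" and \<xi>s: "\<xi>s \<longlonglongrightarrow> 0"
    and frechet: "\<And>n. frechet_subgrad h (zs n) (\<xi>s n)"
    unfolding limiting_subdiff_def by blast
  have "(\<lambda>n. h (zs n) - h (zs n + d)) \<longlonglongrightarrow> h z - h (z + d)"
    using zs by (intro tendsto_diff isCont_tendsto_compose[OF assms(1)]
        isCont_tendsto_compose[OF assms(2)] tendsto_add tendsto_const)
  moreover have "(\<lambda>n. norm (\<xi>s n) * norm d) \<longlonglongrightarrow> 0"
    using \<xi>s by (intro tendsto_mult_left_zero tendsto_norm_zero)
  moreover have "h (zs n) - h (zs n + d) \<le> norm (\<xi>s n) * norm d" for n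
    using frechet_subgrad_decrease_le[OF frechet convex] .
  ultimately have "h z - h (z + d) \<le> 0"
    by (intro LIMSEQ_le) auto
  then show False
    using assms(4) by simp
qed

section \<open>Critical points of the population objective\<close>

lemma fP_critical_imp_snd_eq_projection:
  fixes wb w :: "real^'n" and xb x :: "real^'m"
  assumes "0 \<in> limiting_subdiff (fP wb xb) (w, x)" and "w \<noteq> 0"
  shows "x = ((w \<bullet> wb) / (w \<bullet> w)) *\<^sub>R xb"
proof (rule ccontr)
  let ?d = "(0, ((w \<bullet> wb) / (w \<bullet> w)) *\<^sub>R xb - x)"
  assume "x \<noteq> ((w \<bullet> wb) / (w \<bullet> w)) *\<^sub>R xb"
  then have "0 \<notin> limiting_subdiff (fP wb xb) (w, x)"
  proof (intro zero_notin_limiting_subdiff_if_descent[where d="?d"] isCont_fP)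
    show "fP wb xb (z' + t *\<^sub>R ?d) \<le> (1 - t) * fP wb xb z' + t * fP wb xb (z' + ?d)"
      if "0 \<le> t" and "t \<le> 1" for z' t
      using fP_convex_snd[OF that] by (cases z') simp
  qed (use fP_snd_projection_less[OF assms(2)] in simp)
  with assms(1) show False
    by contradiction
qed

lemma fP_critical_imp_fst_eq_projection:
  fixes wb w :: "real^'n" and xb x :: "real^'m"
  assumes "0 \<in> limiting_subdiff (fP wb xb) (w, x)" and "x \<noteq> 0"
  shows "w = ((x \<bullet> xb) / (x \<bullet> x)) *\<^sub>R wb"
proof (rule ccontr)
  let ?d = "(((x \<bullet> xb) / (x \<bullet> x)) *\<^sub>R wb - w, 0)"
  assume "w \<noteq> ((x \<bullet> xb) / (x \<bullet> x)) *\<^sub>R wb"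
  then have "0 \<notin> limiting_subdiff (fP wb xb) (w, x)"
  proof (intro zero_notin_limiting_subdiff_if_descent[where d="?d"] isCont_fP)
    show "fP wb xb (z' + t *\<^sub>R ?d) \<le> (1 - t) * fP wb xb z' + t * fP wb xb (z' + ?d)"
      if "0 \<le> t" and "t \<le> 1" for z' t
      using fP_convex_fst[OF that] by (cases z') simp
  qed (use fP_fst_projection_less[OF assms(2)] in simp)
  with assms(1) show False
    by contradiction
qed

lemma frechet_subgrad_fP_zero_if_orthogonal:
  fixes wb w :: "real^'n" and xb x :: "real^'m"
  assumes "wb \<noteq> 0" and "xb \<noteq> 0" and "w \<bullet> wb = 0" and "x \<bullet> xb = 0" and "w = 0 \<or> x = 0"
  shows "frechet_subgrad (fP wb xb) (w, x) 0"
proof (rule frechet_subgrad_zero_if_quadratic_minorant)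
  let ?M = "fP wb xb (w, x) / (norm wb * norm xb)"
  show "?M \<ge> 0"
    by (simp add: fP_nonneg)
  fix y :: "(real^'n) \<times> (real^'m)"
  obtain w' x' where y: "y = (w', x')"
    by fastforce
  have "norm (w' - w) * norm (x' - x) \<le> norm (y - (w, x)) * norm (y - (w, x))"
    using norm_fst_le[of "w' - w" "x' - x"] norm_snd_le[of "x' - x" "w' - w"] y by (intro mult_mono) auto
  then have "?M * (norm (w' - w) * norm (x' - x)) \<le> ?M * (norm (y - (w, x)))\<^sup>2"
    using \<open>?M \<ge> 0\<close> unfolding power2_eq_square by (rule mult_left_mono)
  then show "fP wb xb (w, x) - ?M * (norm (y - (w, x)))\<^sup>2 \<le> fP wb xb y"
    using fP_quadratic_minorant[OF assms, of w' x'] y by simp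
qed

lemma frechet_subgrad_fP_zero_at_minimizer:
  fixes wb :: "real^'n" and xb :: "real^'m"
  assumes "\<alpha> \<noteq> 0"
  shows "frechet_subgrad (fP wb xb) (\<alpha> *\<^sub>R wb, (1 / \<alpha>) *\<^sub>R xb) 0"
proof (rule frechet_subgrad_zero_if_quadratic_minorant[where M=0])
  have "fP wb xb (\<alpha> *\<^sub>R wb, (1 / \<alpha>) *\<^sub>R xb) = 0"
    using assms by (simp add: fP_eq case_prod_unfold)
  then show "fP wb xb (\<alpha> *\<^sub>R wb, (1 / \<alpha>) *\<^sub>R xb) - 0 * (norm (y - (\<alpha> *\<^sub>R wb, (1 / \<alpha>) *\<^sub>R xb)))\<^sup>2
      \<le> fP wb xb y" for y
    by (simp add: fP_nonneg)
qed simp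

lemma stationary_set_if_projections:
  fixes wb w :: "real^'n" and xb x :: "real^'m"
  assumes "wb \<noteq> 0" and "xb \<noteq> 0"
    and snd: "w \<noteq> 0 \<Longrightarrow> x = ((w \<bullet> wb) / (w \<bullet> w)) *\<^sub>R xb"
    and fst: "x \<noteq> 0 \<Longrightarrow> w = ((x \<bullet> xb) / (x \<bullet> x)) *\<^sub>R wb"
  shows "(w, x) \<in> {(\<alpha> *\<^sub>R wb, (1 / \<alpha>) *\<^sub>R xb) | \<alpha>. \<alpha> \<noteq> 0} \<union> {0}
    \<union> {(w, x). w \<bullet> wb = 0 \<and> x \<bullet> xb = 0 \<and> outer w x = 0}"
proof (cases "w = 0"; cases "x = 0")
  assume "w = 0" "x = 0"
  then show ?thesis
    by (simp add: zero_prod_def)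
next
  assume "w = 0" "x \<noteq> 0"
  then have "x \<bullet> xb = 0"
    using fst assms(1) by simp
  then show ?thesis
    using \<open>w = 0\<close> by (simp add: outer_eq_0_iff)
next
  assume "w \<noteq> 0" "x = 0"
  then have "w \<bullet> wb = 0"
    using snd assms(2) by simp
  then show ?thesis
    using \<open>x = 0\<close> by (simp add: outer_eq_0_iff)
next
  assume "w \<noteq> 0" "x \<noteq> 0"
  define \<sigma> where "\<sigma> = (x \<bullet> xb) / (x \<bullet> x)"
  have w: "w = \<sigma> *\<^sub>R wb"
    using fst \<open>x \<noteq> 0\<close> by (simp add: \<sigma>_def)
  then have "\<sigma> \<noteq> 0"
    using \<open>w \<noteq> 0\<close> by auto
  then have "x = (1 / \<sigma>) *\<^sub>R xb"
    using snd \<open>w \<noteq> 0\<close> assms(1) by (simp add: w power2_eq_square)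
  then show ?thesis
    using w \<open>\<sigma> \<noteq> 0\<close> by blast
qed

theorem theorem3p4:
  fixes wbar :: "real ^ 'n" and xbar :: "real ^ 'm"
  assumes "wbar \<noteq> 0" and "xbar \<noteq> 0"
  shows "{z. 0 \<in> limiting_subdiff (fP wbar xbar) z} =
     {(\<alpha> *\<^sub>R wbar, (1 / \<alpha>) *\<^sub>R xbar) | \<alpha>. \<alpha> \<noteq> 0}
     \<union> {0}
     \<union> {(w, x). w \<bullet> wbar = 0 \<and> x \<bullet> xbar = 0 \<and> outer w x = 0}"
  (is "?critical = ?stationary")
proof (intro set_eqI iffI)
  fix z
  assume "z \<in> ?critical"
  moreover obtain w x where z: "z = (w, x)"
    by fastforce
  ultimately have critical: "0 \<in> limiting_subdiff (fP wbar xbar) (w, x)"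
    by (simp add: z)
  show "z \<in> ?stationary"
    unfolding z
    by (intro stationary_set_if_projections assms fP_critical_imp_snd_eq_projection[OF critical]
        fP_critical_imp_fst_eq_projection[OF critical])
next
  fix z
  assume "z \<in> ?stationary"
  then have "frechet_subgrad (fP wbar xbar) z 0"
    using frechet_subgrad_fP_zero_at_minimizer frechet_subgrad_fP_zero_if_orthogonal[OF assms]
    by (auto simp: outer_eq_0_iff zero_prod_def)
  then show "z \<in> ?critical"
    by (simp add: limiting_subdiff_if_frechet_subgrad)
qed

end
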